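(* Let $n$ be a positive integer and let $\Omega_1,\Omega_2$ be two distinct copies of $2^{[n]}$. For $i=1,2$ let $\bm{p}_i=(p_i^{(1)},\dots,p_i^{(n)})$ be a probability vector (i.e. $0<p_i^{(\ell)}<1$), write $p_i:=p_i^{(1)}$, and let $\mu_i$ be the product measure on $\Omega_i$, $\mu_i(U)=\sum_{x\in U}\prod_{\ell\in x}p_i^{(\ell)}\prod_{k\in[n]\setminus x}(1-p_i^{(k)})$. Assume that $p_i=\max\{p_i^{(\ell)}:\ell\in[n]\}$ for $i=1,2$, that $p_1\geqslant p_2$, and that $p_1\leqslant 1/2$. If $U_1\subset\Omega_1$, $U_2\subset\Omega_2$ are cross-intersecting (i.e. $x\cap y\neq\emptyset$ for all $x\in U_1$, $y\in U_2$), then $\mu_1(U_1)\mu_2(U_2)\leqslant p_1p_2$.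
   Context: A probability vector is a vector with all coordinates strictly between $0$ and $1$. *)

theory Defs
  imports Complex_Main
begin

(* [n] = {1..n}; a probability vector p : {1..n} -> (0,1) is modelled as nat => real *)

definition prod_measure :: "nat \<Rightarrow> (nat \<Rightarrow> real) \<Rightarrow> nat set set \<Rightarrow> real" where
  "prod_measure n p U =
     (\<Sum>x\<in>U. (\<Prod>l\<in>x. p l) * (\<Prod>k\<in>{1..n} - x. 1 - p k))"

definition cross_intersecting :: "'a set set \<Rightarrow> 'a set set \<Rightarrow> bool" where
  "cross_intersecting U V \<longleftrightarrow> (\<forall>x\<in>U. \<forall>y\<in>V. x \<inter> y \<noteq> {})"

end

theory Submission
  imports Defs "HOL-Analysis.Analysis"
begin

text \<open>Induction on \<open>n\<close>, following the pair \<open>(\<mu>\<^sub>1(U\<^sub>1), \<mu>\<^sub>2(U\<^sub>2))\<close>. Splitting both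
  families at the last coordinate \<open>m\<close> writes each measure as the convex combination
  \<open>(1 - p\<^sub>i m) \<mu>\<^sub>i(deletion) + p\<^sub>i m \<mu>\<^sub>i(link)\<close>, and the pairs (deletion, deletion),
  (deletion, link), (link, deletion) are again cross-intersecting. It therefore suffices to
  find a region of \<open>[0,1]\<^sup>2\<close> that contains \<open>(0,0)\<close>, \<open>(0,1)\<close>, \<open>(1,0)\<close>, is closed under
  this combination for weights at most \<open>p\<^sub>1\<close> resp. \<open>p\<^sub>2\<close>, and on which \<open>x y \<le> p\<^sub>1 p\<^sub>2\<close>.
  With \<open>\<alpha>, \<beta>\<close> chosen so that \<open>(1 - p\<^sub>1)\<^sup>\<alpha> = p\<^sub>2\<close> and \<open>(1 - p\<^sub>2)\<^sup>\<beta> = p\<^sub>1\<close>, the region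
  \<open>y \<le> (1 - x)\<^sup>\<alpha>\<close>, \<open>x \<le> (1 - y)\<^sup>\<beta>\<close>, and \<open>y \<le> p\<^sub>2 + (1 - p\<^sub>2)(1 - x/p\<^sub>1)\<^sup>\<alpha>\<close> for \<open>x < p\<^sub>1\<close>
  does the job: closure comes from convexity of \<open>t \<mapsto> t\<^sup>\<alpha>\<close>, and the product bound from
  maximising \<open>(1 - z) z\<^sup>g\<close>.\<close>

lemma bernoulli_powr_ge:
  fixes r x :: real
  assumes "1 \<le> r" "-1 \<le> x"
  shows "1 + r * x \<le> (1 + x) powr r"
proof (cases "x = -1")
  case True
  then show ?thesis using assms by simp
next
  case False
  have "r * ((1 + x) - 1) \<le> (1 + x) powr r - 1 powr r"
    using assms False
    by (intro convex_on_imp_above_tangent[OF powr_convex[OF assms(1)]])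
       (auto intro!: derivative_eq_intros simp: interior_open)
  then show ?thesis by simp
qed

lemma bernoulli_powr_le:
  fixes r x :: real
  assumes "0 \<le> r" "r \<le> 1" "-1 \<le> x"
  shows "(1 + x) powr r \<le> 1 + r * x"
proof (cases "r = 0")
  case True
  then show ?thesis by simp
next
  case False
  define y where "y = (1 + x) powr r - 1"
  have "1 + (1 / r) * y \<le> (1 + y) powr (1 / r)"
    using assms False by (intro bernoulli_powr_ge) (auto simp: y_def)
  also have "\<dots> = 1 + x"
    using assms False by (simp add: y_def powr_powr)
  finally have "y \<le> r * x"
    using assms False by (simp add: field_simps)
  then show ?thesis by (simp add: y_def)
qed

lemma powr_increment_mono:
  fixes g x y d :: real
  assumes "1 \<le> g" "0 \<le> x" "x \<le> y" "0 \<le> d"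
  shows "(x + d) powr g - x powr g \<le> (y + d) powr g - y powr g"
proof -
  let ?h = "\<lambda>t. (t + d) powr g - t powr g"
  have "?h x \<le> ?h y"
  proof (rule DERIV_nonneg_imp_increasing_open[OF \<open>x \<le> y\<close>])
    fix t assume t: "x < t" "t < y"
    then have "0 < t" using assms by linarith
    then have "DERIV ?h t :> g * ((t + d) powr (g - 1) - t powr (g - 1))"
      using assms by (auto intro!: derivative_eq_intros simp: right_diff_distrib)
    moreover have "t powr (g - 1) \<le> (t + d) powr (g - 1)"
      using \<open>0 < t\<close> assms by (intro powr_mono2) auto
    ultimately show "\<exists>y. DERIV ?h t :> y \<and> 0 \<le> y"
      using assms by force
  next
    show "continuous_on {x..y} ?h"
      using assms by (intro continuous_intros continuous_on_powr') auto
  qed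
  then show ?thesis by simp
qed

lemma powr_superadditive:
  fixes g x d :: real
  assumes "1 \<le> g" "0 \<le> x" "0 \<le> d"
  shows "x powr g + d powr g \<le> (x + d) powr g"
  using powr_increment_mono[of g 0 x d] assms by (simp add: add.commute)

text \<open>Writing \<open>q = c powr g\<close> with \<open>c \<le> 1 - p\<close>, the left-hand side is \<open>U powr g\<close> plus the
  increment of \<open>t powr g\<close> over \<open>[c * U, c * V]\<close>, which is at most its increment over
  \<open>[U, U + c * (V - U)]\<close>.\<close>
lemma powr_weighted_mean_le:
  fixes g U V p q :: real
  assumes g: "1 \<le> g" and U: "0 \<le> U" "U \<le> V" and p: "0 \<le> p" "p \<le> 1"
    and q: "0 \<le> q" "q \<le> (1 - p) powr g"
  shows "(1 - q) * U powr g + q * V powr g \<le> ((1 - p) * V + p * U) powr g"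
proof -
  define c where "c = q powr (1 / g)"
  have c0: "0 \<le> c" by (simp add: c_def)
  have cg: "c powr g = q" using q g by (simp add: c_def powr_powr)
  have "c \<le> ((1 - p) powr g) powr (1 / g)"
    unfolding c_def using q g by (intro powr_mono2) auto
  also have "\<dots> = 1 - p" using p g by (simp add: powr_powr)
  finally have c1: "c \<le> 1 - p" .
  have "(c * U + c * (V - U)) powr g - (c * U) powr g \<le> (U + c * (V - U)) powr g - U powr g"
    using c0 c1 U p g by (intro powr_increment_mono) (auto simp: mult_left_le_one_le)
  also have "c * U + c * (V - U) = c * V" by (simp add: algebra_simps)
  finally have "q * V powr g - q * U powr g \<le> (U + c * (V - U)) powr g - U powr g"
    using c0 U cg by (simp add: powr_mult)
  moreover have "(U + c * (V - U)) powr g \<le> ((1 - p) * V + p * U) powr g"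
  proof (rule powr_mono2)
    show "0 \<le> U + c * (V - U)" using c0 U by simp
    have "c * (V - U) \<le> (1 - p) * (V - U)" using c1 U by (intro mult_right_mono) auto
    then show "U + c * (V - U) \<le> (1 - p) * V + p * U" by (simp add: algebra_simps)
  qed (use g in auto)
  ultimately show ?thesis by (simp add: algebra_simps)
qed

lemma powr_bound_convex_combination:
  fixes g a0 a1 b0 b1 p q :: real
  assumes g: "1 \<le> g" and a: "0 \<le> a0" "a0 \<le> 1" "0 \<le> a1" "a1 \<le> 1"
    and p: "0 \<le> p" "p \<le> 1" and q: "0 \<le> q" "q \<le> (1 - p) powr g"
    and b: "b0 \<le> (1 - a0) powr g" "b1 \<le> (1 - a0) powr g" "b0 \<le> (1 - a1) powr g"
  shows "(1 - q) * b0 + q * b1 \<le> (1 - ((1 - p) * a0 + p * a1)) powr g"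
proof -
  have "(1 - p) powr g \<le> 1" using p g by (intro powr_le1) auto
  with q have q1: "q \<le> 1" by linarith
  show ?thesis
  proof (cases "a1 \<le> a0")
    case True
    have "(1 - q) * b0 + q * b1 \<le> (1 - a0) powr g"
      using b q q1 by (intro convex_bound_le) auto
    also have "\<dots> \<le> (1 - ((1 - p) * a0 + p * a1)) powr g"
      using convex_bound_le[of a0 a0 a1 "1 - p" p] True a p g by (intro powr_mono2) auto
    finally show ?thesis .
  next
    case False
    have "(1 - q) * b0 + q * b1 \<le> (1 - q) * (1 - a1) powr g + q * (1 - a0) powr g"
      using b q q1 by (intro add_mono mult_left_mono) auto
    also have "\<dots> \<le> ((1 - p) * (1 - a0) + p * (1 - a1)) powr g"
      using False a p q g by (intro powr_weighted_mean_le) auto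
    also have "(1 - p) * (1 - a0) + p * (1 - a1) = 1 - ((1 - p) * a0 + p * a1)"
      by (simp add: algebra_simps)
    finally show ?thesis .
  qed
qed

lemma one_minus_powr_mult_one_plus_powr_le_1:
  fixes s g :: real
  assumes "0 \<le> s" "s \<le> 1" "0 \<le> g"
  shows "(1 - s) powr g * (1 + s) powr g \<le> 1"
proof -
  have "(1 - s) powr g * (1 + s) powr g = (1 - s * s) powr g"
    using assms by (simp add: powr_mult[symmetric] algebra_simps)
  also have "\<dots> \<le> 1"
    using assms mult_le_one[of s s] by (intro powr_le1) auto
  finally show ?thesis .
qed

text \<open>\<open>z \<mapsto> (1 - z) * z powr g\<close> increases up to \<open>g / (1 + g) \<ge> c\<close>.\<close>
lemma one_minus_mult_powr_le:
  fixes c g z :: real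
  assumes c: "0 < c" "c < 1" and g: "1 \<le> g" "c / (1 - c) \<le> g" and z: "0 \<le> z" "z \<le> c"
  shows "(1 - z) * z powr g \<le> (1 - c) * c powr g"
proof (cases "z = 0")
  case True
  then show ?thesis using c g by simp
next
  case False
  define s where "s = 1 - z / c"
  have s: "0 \<le> s" "s < 1" using z c False by (auto simp: s_def field_simps)
  have zs: "z = c * (1 - s)" using c by (simp add: s_def)
  have "1 - z = (1 - c) * (1 + c / (1 - c) * s)" using c by (simp add: zs field_simps)
  also have "\<dots> \<le> (1 - c) * (1 + g * s)"
    using c g s by (intro mult_left_mono add_left_mono mult_right_mono) auto
  also have "\<dots> \<le> (1 - c) * (1 + s) powr g"
    using c g s bernoulli_powr_ge[of g s] by (intro mult_left_mono) auto
  finally have "(1 - z) * (1 - s) powr g \<le> (1 - c) * ((1 - s) powr g * (1 + s) powr g)"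
    using s by (simp add: mult_right_mono mult_ac)
  also have "\<dots> \<le> 1 - c"
    using c s g one_minus_powr_mult_one_plus_powr_le_1[of s g] by (simp add: mult_left_le)
  finally have "(1 - z) * (1 - s) powr g \<le> 1 - c" .
  then have "c powr g * ((1 - z) * (1 - s) powr g) \<le> c powr g * (1 - c)"
    by (intro mult_left_mono) auto
  then show ?thesis using c s by (simp add: zs powr_mult mult_ac)
qed

text \<open>Here the maximum of \<open>z \<mapsto> (1 - z) * z powr b\<close> is attained at \<open>b / (1 + b) \<le> c\<close>.\<close>
lemma one_minus_mult_powr_le_divide:
  fixes c b z :: real
  assumes c: "0 < c" "c < 1" and b: "0 \<le> b" "b \<le> c / (1 - c)" and z: "0 < z" "z \<le> c"
  shows "(1 - z) * z powr b \<le> c powr b / (1 + b)"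
proof -
  define s where "s = 1 - z / c"
  have s: "0 \<le> s" "s < 1" using z c by (auto simp: s_def field_simps)
  have zs: "z = c * (1 - s)" using c by (simp add: s_def)
  have "b \<le> c * (1 + b)" using b c by (simp add: field_simps)
  then have "b * (1 - s) \<le> c * (1 + b) * (1 - s)" using s by (intro mult_right_mono) auto
  then have A: "1 - z \<le> (1 + b * s) / (1 + b)" using b by (simp add: zs field_simps)
  have C: "(1 - s) powr b * (1 + b * s) \<le> 1"
  proof (cases "1 \<le> b")
    case True
    have "(1 - s) powr b * (1 + b * s) \<le> (1 - s) powr b * (1 + s) powr b"
      using True s bernoulli_powr_ge[of b s] by (intro mult_left_mono) auto
    also have "\<dots> \<le> 1" using s b by (intro one_minus_powr_mult_one_plus_powr_le_1) auto
    finally show ?thesis .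
  next
    case False
    have "(1 + - s) powr b \<le> 1 + b * - s" using False b s by (intro bernoulli_powr_le) auto
    then have "(1 - s) powr b * (1 + b * s) \<le> (1 - b * s) * (1 + b * s)"
      using b s by (intro mult_right_mono) auto
    also have "\<dots> = 1 - (b * s)\<^sup>2" by (simp add: power2_eq_square algebra_simps)
    also have "\<dots> \<le> 1" by simp
    finally show ?thesis .
  qed
  have "(1 - z) * (1 - s) powr b \<le> (1 + b * s) / (1 + b) * (1 - s) powr b"
    using A by (intro mult_right_mono) auto
  also have "\<dots> \<le> 1 / (1 + b)" using C b by (simp add: divide_right_mono mult.commute)
  finally have "c powr b * ((1 - z) * (1 - s) powr b) \<le> c powr b * (1 / (1 + b))"
    by (intro mult_left_mono) auto
  then show ?thesis using c s by (simp add: zs powr_mult mult_ac)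
qed

lemma mult_powr_minus_one_le_1:
  fixes s x :: real
  assumes "2 \<le> s" "0 < x" "x \<le> 1/2"
  shows "s * x powr (s - 1) \<le> 1"
proof -
  have "x powr (s - 1) \<le> (1/2) powr (s - 1)" using assms by (intro powr_mono2) auto
  also have "\<dots> = 1 / 2 powr (s - 1)" by (simp add: powr_divide)
  finally have "s * x powr (s - 1) \<le> s * (1 / 2 powr (s - 1))"
    using assms by (intro mult_left_mono) auto
  also have "\<dots> \<le> 1"
    using assms bernoulli_powr_ge[of "s - 1" 1] by (simp add: divide_le_eq)
  finally show ?thesis .
qed

locale bias_pair =
  fixes P1 P2 :: real
  assumes P2_pos: "0 < P2" and P2_le_P1: "P2 \<le> P1" and P1_le_half: "P1 \<le> 1/2"
begin

definition \<alpha> :: real where "\<alpha> = ln P2 / ln (1 - P1)"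
definition \<beta> :: real where "\<beta> = ln P1 / ln (1 - P2)"

definition phi :: "real \<Rightarrow> real" where
  "phi x = P2 + (1 - P2) * (1 - x / P1) powr \<alpha>"

definition feasible :: "real \<Rightarrow> real \<Rightarrow> bool" where
  "feasible x y \<longleftrightarrow> 0 \<le> x \<and> x \<le> 1 \<and> 0 \<le> y \<and> y \<le> 1 \<and>
     y \<le> (1 - x) powr \<alpha> \<and> x \<le> (1 - y) powr \<beta> \<and> (x < P1 \<longrightarrow> y \<le> phi x)"

lemma P1_pos: "0 < P1"
  using P2_pos P2_le_P1 by linarith

lemma P1_less_1: "P1 < 1"
  using P1_le_half by linarith

lemma P2_less_1: "P2 < 1"
  using P1_le_half P2_le_P1 by linarith

lemma alpha_ge_1: "1 \<le> \<alpha>"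
proof -
  have "ln (1 - P1) < 0" using P1_pos P1_less_1 by simp
  moreover have "ln P2 \<le> ln (1 - P1)" using P2_pos P2_le_P1 P1_le_half by simp
  ultimately show ?thesis unfolding \<alpha>_def by simp
qed

lemma beta_ge_1: "1 \<le> \<beta>"
proof -
  have "ln (1 - P2) < 0" using P2_pos P2_less_1 by simp
  moreover have "ln P1 \<le> ln (1 - P2)" using P1_pos P2_le_P1 P1_le_half by simp
  ultimately show ?thesis unfolding \<beta>_def by simp
qed

lemma one_minus_P1_powr_alpha: "(1 - P1) powr \<alpha> = P2"
  using P1_pos P1_less_1 P2_pos by (simp add: powr_def \<alpha>_def)

lemma one_minus_P2_powr_beta: "(1 - P2) powr \<beta> = P1"
  using P2_pos P2_less_1 P1_pos by (simp add: powr_def \<beta>_def)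

lemma P2_le_one_minus_powr_alpha:
  assumes "p \<le> P1"
  shows "P2 \<le> (1 - p) powr \<alpha>"
  using assms P1_less_1 alpha_ge_1 powr_mono2[of \<alpha> "1 - P1" "1 - p"]
  by (simp add: one_minus_P1_powr_alpha)

lemma P1_le_one_minus_powr_beta:
  assumes "q \<le> P2"
  shows "P1 \<le> (1 - q) powr \<beta>"
  using assms P2_less_1 beta_ge_1 powr_mono2[of \<beta> "1 - P2" "1 - q"]
  by (simp add: one_minus_P2_powr_beta)

lemma odds_le_alpha: "(1 - P1) / P1 \<le> \<alpha>"
proof -
  define K where "K = (1 - P1) / P1"
  have "1 \<le> K" using P1_pos P1_le_half by (simp add: K_def field_simps)
  then have "1 + K * - P1 \<le> (1 + - P1) powr K"
    using P1_less_1 by (intro bernoulli_powr_ge) auto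
  moreover have "1 + K * - P1 = P1" using P1_pos by (simp add: K_def field_simps)
  ultimately have "ln P2 \<le> ln ((1 - P1) powr K)"
    using P2_le_P1 P2_pos P1_less_1 by (subst ln_le_cancel_iff) auto
  then have "ln P2 \<le> K * ln (1 - P1)" by simp
  moreover have "ln (1 - P1) < 0" using P1_pos P1_less_1 by simp
  ultimately show ?thesis by (simp add: K_def \<alpha>_def le_divide_eq)
qed

lemma one_minus_P2_le_alpha_mult: "1 - P2 \<le> \<alpha> * (1 - P1)"
proof (cases "2 \<le> \<alpha>")
  case True
  have "1 - P2 \<le> 2 * (1 - P1)" using P1_le_half P2_pos by simp
  also have "\<dots> \<le> \<alpha> * (1 - P1)" using True P1_less_1 by (intro mult_right_mono) auto
  finally show ?thesis .
next
  case False
  have "(1/2) powr \<alpha> \<le> (1 - P1) powr \<alpha>"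
    using P1_le_half alpha_ge_1 by (intro powr_mono2) auto
  moreover have "(1/2::real) powr \<alpha> = (1/2) * (1/2) powr (\<alpha> - 1)"
    using powr_add[of "1/2::real" 1 "\<alpha> - 1"] by simp
  moreover have "2 - \<alpha> \<le> (1/2::real) powr (\<alpha> - 1)"
  proof -
    have "ln (2::real) \<le> 1" using ln_le_minus_one[of 2] by simp
    then have "2 - \<alpha> \<le> 1 + (\<alpha> - 1) * ln (1/2)"
      using alpha_ge_1 mult_left_mono[of "ln 2" 1 "\<alpha> - 1"] by (simp add: ln_div)
    also have "\<dots> \<le> exp ((\<alpha> - 1) * ln (1/2))" by (rule exp_ge_add_one_self)
    finally show ?thesis by (simp add: powr_def)
  qed
  ultimately have "(2 - \<alpha>) / 2 \<le> P2" by (simp add: one_minus_P1_powr_alpha)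
  moreover have "\<alpha> * (1/2) \<le> \<alpha> * (1 - P1)"
    using P1_le_half alpha_ge_1 by (intro mult_left_mono) auto
  ultimately show ?thesis by simp
qed

lemma one_minus_P2_mult_le_P2:
  assumes z: "0 < z" "z \<le> 1 - P1"
  shows "(1 - P2) * ((1 - z) * z powr (\<alpha> - 1)) \<le> P2"
proof -
  define c where "c = 1 - P1"
  define \<gamma> where "\<gamma> = \<alpha> - 1"
  have c: "0 < c" "c < 1" "1/2 \<le> c" using P1_pos P1_less_1 P1_le_half by (auto simp: c_def)
  have \<gamma>: "0 \<le> \<gamma>" using alpha_ge_1 by (simp add: \<gamma>_def)
  have P2_eq: "P2 = c * c powr \<gamma>"
    using one_minus_P1_powr_alpha powr_add[of c 1 \<gamma>] c by (simp add: c_def \<gamma>_def)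
  have bound: "(1 - P2) * ((1 - z) * z powr \<gamma>) \<le> c * c powr \<gamma>"
  proof (cases "c / (1 - c) \<le> \<gamma>")
    case True
    have "1 \<le> c / (1 - c)" using c by (simp add: field_simps)
    then have "1 \<le> \<gamma>" using True by linarith
    then have "(1 - z) * z powr \<gamma> \<le> (1 - c) * c powr \<gamma>"
      using True c z by (intro one_minus_mult_powr_le) (auto simp: c_def)
    then have "(1 - P2) * ((1 - z) * z powr \<gamma>) \<le> (1 - P2) * (1 - c) * c powr \<gamma>"
      using P2_less_1 by (simp add: mult_left_mono mult.assoc)
    also have "\<dots> \<le> c * c powr \<gamma>"
    proof (intro mult_right_mono)
      have "(1 - P2) * (1 - c) \<le> 1 - c" using P2_pos P2_less_1 c by (intro mult_left_le_one_le) auto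
      then show "(1 - P2) * (1 - c) \<le> c" using c by linarith
    qed auto
    finally show ?thesis .
  next
    case False
    then have "(1 - z) * z powr \<gamma> \<le> c powr \<gamma> / (1 + \<gamma>)"
      using c z \<gamma> by (intro one_minus_mult_powr_le_divide) (auto simp: c_def)
    then have "(1 - P2) * ((1 - z) * z powr \<gamma>) \<le> (1 - P2) * (c powr \<gamma> / (1 + \<gamma>))"
      using P2_less_1 by (intro mult_left_mono) auto
    also have "\<dots> = (1 - P2) / (1 + \<gamma>) * c powr \<gamma>" by simp
    also have "\<dots> \<le> c * c powr \<gamma>"
    proof (intro mult_right_mono)
      have "1 - P2 \<le> c * (1 + \<gamma>)"
        using one_minus_P2_le_alpha_mult by (simp add: c_def \<gamma>_def mult.commute)
      then show "(1 - P2) / (1 + \<gamma>) \<le> c" using \<gamma> by (simp add: pos_divide_le_eq)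
    qed simp
    finally show ?thesis .
  qed
  show ?thesis using bound P2_eq unfolding \<gamma>_def by linarith
qed

lemma prod_le_of_ge_P1:
  assumes "P1 \<le> a" "a \<le> 1" "0 \<le> b" "b \<le> (1 - a) powr \<alpha>"
  shows "a * b \<le> P1 * P2"
proof -
  have "a * b \<le> (1 - (1 - a)) * (1 - a) powr \<alpha>"
    using assms P1_pos by (simp add: mult_left_mono)
  also have "\<dots> \<le> (1 - (1 - P1)) * (1 - P1) powr \<alpha>"
    using assms P1_pos P1_less_1 alpha_ge_1 odds_le_alpha
    by (intro one_minus_mult_powr_le) auto
  finally show ?thesis by (simp add: one_minus_P1_powr_alpha)
qed

text \<open>Write \<open>a = P1 powr \<sigma>\<close> with \<open>\<sigma> \<ge> 2\<close>; then \<open>(1 - P2) powr \<sigma> \<le> 1 - b\<close>, so \<open>b \<le> \<sigma> * P2\<close>.\<close>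
lemma prod_le_of_le_P1_square:
  assumes "0 < a" "a \<le> P1 * P1" "0 \<le> b" "b \<le> 1" "a \<le> (1 - b) powr \<beta>"
  shows "a * b \<le> P1 * P2"
proof -
  define \<sigma> where "\<sigma> = ln a / ln P1"
  have ln_P1: "ln P1 < 0" using P1_pos P1_less_1 by simp
  have "ln a \<le> ln (P1 * P1)" using assms P1_pos by (subst ln_le_cancel_iff) auto
  then have "ln a \<le> 2 * ln P1" using P1_pos by (simp add: ln_mult)
  then have \<sigma>: "2 \<le> \<sigma>" using ln_P1 unfolding \<sigma>_def by (simp add: le_divide_eq)
  have a_eq: "a = P1 powr \<sigma>" using ln_P1 assms P1_pos by (simp add: powr_def \<sigma>_def)
  have "P1 powr \<sigma> = ((1 - P2) powr \<beta>) powr \<sigma>" by (simp only: one_minus_P2_powr_beta)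
  also have "\<dots> = ((1 - P2) powr \<sigma>) powr \<beta>" by (simp add: powr_powr mult.commute)
  finally have "((1 - P2) powr \<sigma>) powr \<beta> \<le> (1 - b) powr \<beta>" using assms a_eq by simp
  then have "(1 - P2) powr \<sigma> \<le> 1 - b"
    using beta_ge_1 assms powr_less_mono2[of \<beta> "1 - b" "(1 - P2) powr \<sigma>"] by force
  moreover have "1 + \<sigma> * - P2 \<le> (1 + - P2) powr \<sigma>"
    using \<sigma> P2_less_1 by (intro bernoulli_powr_ge) auto
  ultimately have b: "b \<le> \<sigma> * P2" by simp
  have "a * b \<le> a * (\<sigma> * P2)"
    using b assms by (intro mult_left_mono) auto
  also have "\<dots> = P1 * (\<sigma> * P1 powr (\<sigma> - 1)) * P2"
    using a_eq powr_add[of P1 1 "\<sigma> - 1"] P1_pos by simp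
  also have "\<dots> \<le> P1 * 1 * P2"
    using \<sigma> P1_pos P2_pos P1_le_half mult_powr_minus_one_le_1[of \<sigma> P1]
    by (intro mult_right_mono mult_left_mono) auto
  finally show ?thesis by simp
qed

lemma prod_le_of_le_phi:
  assumes "P1 * P1 \<le> a" "a < P1" "0 \<le> b" "b \<le> phi a"
  shows "a * b \<le> P1 * P2"
proof -
  define z where "z = 1 - a / P1"
  have z: "0 < z" "z \<le> 1 - P1" using assms P1_pos by (auto simp: z_def field_simps)
  have a_eq: "a = P1 * (1 - z)" using P1_pos by (simp add: z_def)
  have "phi a = P2 + (1 - P2) * z powr \<alpha>" by (simp add: phi_def z_def)
  moreover have "z powr \<alpha> = z * z powr (\<alpha> - 1)"
    using powr_add[of z 1 "\<alpha> - 1"] z by simp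
  ultimately have phi_a: "phi a = P2 + (1 - P2) * (z * z powr (\<alpha> - 1))" by simp
  have "(1 - z) * phi a = (1 - z) * P2 + z * ((1 - P2) * ((1 - z) * z powr (\<alpha> - 1)))"
    unfolding phi_a by (simp add: algebra_simps)
  also have "\<dots> \<le> (1 - z) * P2 + z * P2"
    using one_minus_P2_mult_le_P2 z by (intro add_left_mono mult_left_mono) auto
  finally have "(1 - z) * phi a \<le> P2" by (simp add: algebra_simps)
  have "0 < P1 * P1" using P1_pos by simp
  then have "a * b \<le> a * phi a" using assms by (intro mult_left_mono) auto
  also have "\<dots> = P1 * ((1 - z) * phi a)" by (simp add: a_eq)
  also have "\<dots> \<le> P1 * P2" using \<open>(1 - z) * phi a \<le> P2\<close> P1_pos by (intro mult_left_mono) auto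
  finally show ?thesis .
qed

lemma feasible_prod_le:
  assumes "feasible a b"
  shows "a * b \<le> P1 * P2"
proof -
  consider "P1 \<le> a" | "a = 0" | "0 < a" "a \<le> P1 * P1" | "P1 * P1 \<le> a" "a < P1"
    using assms unfolding feasible_def by linarith
  then show ?thesis
  proof cases
    case 1
    then show ?thesis using assms unfolding feasible_def by (intro prod_le_of_ge_P1) auto
  next
    case 2
    then show ?thesis using P1_pos P2_pos by simp
  next
    case 3
    then show ?thesis using assms unfolding feasible_def by (intro prod_le_of_le_P1_square) auto
  next
    case 4
    then show ?thesis using assms unfolding feasible_def by (intro prod_le_of_le_phi) auto
  qed
qed

lemma phi_ge_P2: "P2 \<le> phi x"
  unfolding phi_def using P2_less_1 by simp

lemma phi_antimono:
  assumes "x \<le> y" "y \<le> P1"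
  shows "phi y \<le> phi x"
proof -
  have "(1 - y / P1) powr \<alpha> \<le> (1 - x / P1) powr \<alpha>"
    using assms P1_pos alpha_ge_1 by (intro powr_mono2) (auto simp: field_simps)
  then show ?thesis unfolding phi_def using P2_less_1 by (intro add_left_mono mult_left_mono) auto
qed

lemma phi_bound_combination_decreasing:
  assumes a: "0 \<le> a0" "a0 \<le> 1" "a1 \<le> a0" and p: "0 \<le> p" "p \<le> 1" and q: "0 \<le> q" "q \<le> 1"
    and b: "b0 \<le> (1 - a0) powr \<alpha>" "b1 \<le> (1 - a0) powr \<alpha>"
      "a0 < P1 \<Longrightarrow> b0 \<le> phi a0" "a0 < P1 \<Longrightarrow> b1 \<le> phi a0"
    and less: "(1 - p) * a0 + p * a1 < P1"
  shows "(1 - q) * b0 + q * b1 \<le> phi ((1 - p) * a0 + p * a1)"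
proof -
  have "(1 - p) * a0 + p * a1 \<le> a0"
    using a p by (intro convex_bound_le) auto
  show ?thesis
  proof (cases "a0 < P1")
    case True
    have "(1 - q) * b0 + q * b1 \<le> phi a0"
      using True b q by (intro convex_bound_le) auto
    also have "\<dots> \<le> phi ((1 - p) * a0 + p * a1)"
      using True \<open>(1 - p) * a0 + p * a1 \<le> a0\<close> by (intro phi_antimono) auto
    finally show ?thesis .
  next
    case False
    have "(1 - q) * b0 + q * b1 \<le> (1 - a0) powr \<alpha>"
      using b q by (intro convex_bound_le) auto
    also have "\<dots> \<le> P2"
      using False a alpha_ge_1 powr_mono2[of \<alpha> "1 - a0" "1 - P1"]
      by (simp add: one_minus_P1_powr_alpha)
    also have "\<dots> \<le> phi ((1 - p) * a0 + p * a1)" by (rule phi_ge_P2)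
    finally show ?thesis .
  qed
qed

lemma phi_bound_combination_below_P1:
  assumes a: "0 \<le> a0" "a0 \<le> a1" "a1 < P1" and p: "0 \<le> p" "p \<le> 1"
    and q: "0 \<le> q" "q \<le> (1 - p) powr \<alpha>"
    and b: "b0 \<le> phi a1" "b1 \<le> phi a0"
  shows "(1 - q) * b0 + q * b1 \<le> phi ((1 - p) * a0 + p * a1)"
proof -
  define U where "U = 1 - a1 / P1"
  define V where "V = 1 - a0 / P1"
  have U: "0 \<le> U" "U \<le> V" using a P1_pos by (auto simp: U_def V_def field_simps)
  have q1: "q \<le> 1" using q p powr_le1[of \<alpha> "1 - p"] alpha_ge_1 by auto
  have "(1 - q) * b0 + q * b1 \<le> (1 - q) * phi a1 + q * phi a0"
    using b q q1 by (intro add_mono mult_left_mono) auto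
  also have "\<dots> = P2 + (1 - P2) * ((1 - q) * U powr \<alpha> + q * V powr \<alpha>)"
    by (simp add: phi_def U_def V_def algebra_simps)
  also have "\<dots> \<le> P2 + (1 - P2) * ((1 - p) * V + p * U) powr \<alpha>"
    using U p q alpha_ge_1 P2_less_1
    by (intro add_left_mono mult_left_mono powr_weighted_mean_le) auto
  also have "(1 - p) * V + p * U = 1 - ((1 - p) * a0 + p * a1) / P1"
    using P1_pos by (simp add: U_def V_def field_simps)
  finally show ?thesis by (simp add: phi_def)
qed

text \<open>With \<open>c = 1 - P1\<close> we have \<open>P2 * V powr \<alpha> = (c * V) powr \<alpha>\<close>, and the right-hand argument
  exceeds \<open>c * V - (c - (1 - a1))\<close>; compare the increments of \<open>t powr \<alpha>\<close> over intervals of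
  length \<open>c - (1 - a1)\<close>.\<close>
lemma powr_alpha_exchange_le:
  assumes p: "0 \<le> p" "p \<le> P1" and a: "0 \<le> a0" "a0 \<le> P1" "P1 \<le> a1" "a1 \<le> 1"
  shows "(1 - a1) powr \<alpha> + P2 * (1 - a0 / P1) powr \<alpha>
    \<le> P2 + (1 - ((1 - p) * a0 + p * a1) / P1) powr \<alpha>"
proof -
  define c where "c = 1 - P1"
  define D where "D = 1 - a1"
  define V where "V = 1 - a0 / P1"
  define S where "S = 1 - ((1 - p) * a0 + p * a1) / P1"
  define S0 where "S0 = c * V - (c - D)"
  have c: "0 < c" "c < 1" using P1_pos P1_less_1 by (auto simp: c_def)
  have D: "0 \<le> D" "D \<le> c" using a by (auto simp: D_def c_def)
  have V: "0 \<le> V" "V \<le> 1" using a P1_pos by (auto simp: V_def field_simps)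
  have c_powr: "c powr \<alpha> = P2" using one_minus_P1_powr_alpha by (simp add: c_def)
  have cV: "P2 * V powr \<alpha> = (c * V) powr \<alpha>" using c V by (simp add: powr_mult c_powr)
  have "S - S0 = (P1 - p) * V + (c - D) * (1 - p / P1)"
    using P1_pos by (simp add: S_def S0_def c_def D_def V_def field_simps)
  moreover have "0 \<le> (c - D) * (1 - p / P1)"
    using D p P1_pos by (intro mult_nonneg_nonneg) (auto simp: field_simps)
  ultimately have "S0 \<le> S" using p V by (smt (verit) mult_nonneg_nonneg)
  have "D powr \<alpha> + P2 * V powr \<alpha> \<le> P2 + S powr \<alpha>"
  proof (cases "0 \<le> S0")
    case True
    have "(S0 + (c - D)) powr \<alpha> - S0 powr \<alpha> \<le> (D + (c - D)) powr \<alpha> - D powr \<alpha>"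
      using True D c V alpha_ge_1 by (intro powr_increment_mono) (auto simp: S0_def mult_left_le_one_le)
    moreover have "S0 + (c - D) = c * V" by (simp add: S0_def)
    moreover have "S0 powr \<alpha> \<le> S powr \<alpha>"
      using True \<open>S0 \<le> S\<close> alpha_ge_1 by (intro powr_mono2) auto
    ultimately show ?thesis using cV by (simp add: c_powr)
  next
    case False
    have "(c * V) powr \<alpha> \<le> (c - D) powr \<alpha>"
      using False c V alpha_ge_1 by (intro powr_mono2) (auto simp: S0_def)
    moreover have "D powr \<alpha> + (c - D) powr \<alpha> \<le> (D + (c - D)) powr \<alpha>"
      using D alpha_ge_1 by (intro powr_superadditive) auto
    ultimately show ?thesis using cV by (simp add: c_powr add_increasing2)
  qed
  then show ?thesis by (simp add: D_def V_def S_def)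
qed

lemma phi_bound_combination_above_P1:
  assumes a: "0 \<le> a0" "a0 < P1" "P1 \<le> a1" "a1 \<le> 1"
    and p: "0 \<le> p" "p \<le> P1" and q: "0 \<le> q" "q \<le> P2"
    and b: "b0 \<le> (1 - a1) powr \<alpha>" "b1 \<le> phi a0"
  shows "(1 - q) * b0 + q * b1 \<le> phi ((1 - p) * a0 + p * a1)"
proof -
  define D where "D = (1 - a1) powr \<alpha>"
  have "D \<le> P2"
    using a alpha_ge_1 powr_mono2[of \<alpha> "1 - a1" "1 - P1"] by (simp add: D_def one_minus_P1_powr_alpha)
  then have D: "D \<le> phi a0" using phi_ge_P2[of a0] by linarith
  have "(1 - q) * b0 + q * b1 \<le> D + q * (phi a0 - D)"
    using b q P2_less_1 mult_left_mono[of b1 "phi a0" q] mult_left_mono[of b0 D "1 - q"]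
    by (simp add: D_def algebra_simps)
  also have "\<dots> \<le> D + P2 * (phi a0 - D)"
    using q D by (intro add_left_mono mult_right_mono) auto
  also have "\<dots> = P2 * P2 + (1 - P2) * (D + P2 * (1 - a0 / P1) powr \<alpha>)"
    by (simp add: phi_def algebra_simps)
  also have "\<dots> \<le> P2 * P2 + (1 - P2) * (P2 + (1 - ((1 - p) * a0 + p * a1) / P1) powr \<alpha>)"
    using powr_alpha_exchange_le[OF p a(1) _ a(3,4)] a(2) P2_less_1
    by (intro add_left_mono mult_left_mono) (auto simp: D_def)
  also have "\<dots> = phi ((1 - p) * a0 + p * a1)"
    by (simp add: phi_def algebra_simps)
  finally show ?thesis .
qed

lemma phi_bound_combination:
  assumes a: "0 \<le> a0" "a0 \<le> 1" "0 \<le> a1" "a1 \<le> 1"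
    and p: "0 \<le> p" "p \<le> P1" and q: "0 \<le> q" "q \<le> P2"
    and b: "b0 \<le> (1 - a0) powr \<alpha>" "b1 \<le> (1 - a0) powr \<alpha>" "b0 \<le> (1 - a1) powr \<alpha>"
      "a0 < P1 \<Longrightarrow> b0 \<le> phi a0" "a0 < P1 \<Longrightarrow> b1 \<le> phi a0" "a1 < P1 \<Longrightarrow> b0 \<le> phi a1"
    and less: "(1 - p) * a0 + p * a1 < P1"
  shows "(1 - q) * b0 + q * b1 \<le> phi ((1 - p) * a0 + p * a1)"
proof -
  have p1: "p \<le> 1" and q1: "q \<le> 1" using p q P1_le_half P2_le_P1 by linarith+
  consider "a1 \<le> a0" | "a0 \<le> a1" "a1 < P1" | "a0 \<le> a1" "P1 \<le> a1" by linarith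
  then show ?thesis
  proof cases
    case 1
    then show ?thesis using a p1 p q q1 b less by (intro phi_bound_combination_decreasing) auto
  next
    case 2
    then show ?thesis
      using a p p1 q b P2_le_one_minus_powr_alpha[of p]
      by (intro phi_bound_combination_below_P1) auto
  next
    case 3
    have "a0 \<le> (1 - p) * a0 + p * a1" using 3 p mult_right_mono[of a0 a1 p] by (simp add: algebra_simps)
    then show ?thesis
      using 3 a p q b less by (intro phi_bound_combination_above_P1) auto
  qed
qed

lemma feasible_combination:
  assumes "feasible a0 b0" "feasible a0 b1" "feasible a1 b0"
    and p: "0 \<le> p" "p \<le> P1" and q: "0 \<le> q" "q \<le> P2"
  shows "feasible ((1 - p) * a0 + p * a1) ((1 - q) * b0 + q * b1)"
proof -
  have p1: "p \<le> 1" and q1: "q \<le> 1" using p q P1_le_half P2_le_P1 by linarith+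
  have a: "0 \<le> a0" "a0 \<le> 1" "0 \<le> a1" "a1 \<le> 1"
    and b: "0 \<le> b0" "b0 \<le> 1" "0 \<le> b1" "b1 \<le> 1"
    and \<alpha>_bounds: "b0 \<le> (1 - a0) powr \<alpha>" "b1 \<le> (1 - a0) powr \<alpha>" "b0 \<le> (1 - a1) powr \<alpha>"
    and \<beta>_bounds: "a0 \<le> (1 - b0) powr \<beta>" "a1 \<le> (1 - b0) powr \<beta>" "a0 \<le> (1 - b1) powr \<beta>"
    and phi_bounds: "a0 < P1 \<Longrightarrow> b0 \<le> phi a0" "a0 < P1 \<Longrightarrow> b1 \<le> phi a0"
      "a1 < P1 \<Longrightarrow> b0 \<le> phi a1"
    using assms unfolding feasible_def by auto
  have "(1 - q) * b0 + q * b1 \<le> (1 - ((1 - p) * a0 + p * a1)) powr \<alpha>"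
    using alpha_ge_1 a p p1 q P2_le_one_minus_powr_alpha[of p] \<alpha>_bounds
    by (intro powr_bound_convex_combination) auto
  moreover have "(1 - p) * a0 + p * a1 \<le> (1 - ((1 - q) * b0 + q * b1)) powr \<beta>"
    using beta_ge_1 b q q1 p P1_le_one_minus_powr_beta[of q] \<beta>_bounds
    by (intro powr_bound_convex_combination) auto
  moreover have "(1 - p) * a0 + p * a1 < P1
      \<Longrightarrow> (1 - q) * b0 + q * b1 \<le> phi ((1 - p) * a0 + p * a1)"
    using a p q \<alpha>_bounds phi_bounds by (intro phi_bound_combination) auto
  moreover have "(1 - p) * a0 + p * a1 \<le> 1" "(1 - q) * b0 + q * b1 \<le> 1"
    using a b p p1 q q1 by (auto intro!: convex_bound_le)
  ultimately show ?thesis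
    unfolding feasible_def using a b p p1 q q1 by simp
qed

lemma feasible_0_0: "feasible 0 0"
  unfolding feasible_def using phi_ge_P2[of 0] P2_pos by simp

lemma feasible_0_1: "feasible 0 1"
  unfolding feasible_def phi_def using P1_pos by simp

lemma feasible_1_0: "feasible 1 0"
  unfolding feasible_def using P1_less_1 by simp

end

definition prod_weight :: "nat \<Rightarrow> (nat \<Rightarrow> real) \<Rightarrow> nat set \<Rightarrow> real" where
  "prod_weight n p x = (\<Prod>l\<in>x. p l) * (\<Prod>k\<in>{1..n} - x. 1 - p k)"

definition deletion :: "'a \<Rightarrow> 'a set set \<Rightarrow> 'a set set" where
  "deletion m U = {x \<in> U. m \<notin> x}"

definition link :: "'a \<Rightarrow> 'a set set \<Rightarrow> 'a set set" where
  "link m U = (\<lambda>x. x - {m}) ` {x \<in> U. m \<in> x}"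

lemma prod_measure_eq_sum_prod_weight: "prod_measure n p U = (\<Sum>x\<in>U. prod_weight n p x)"
  unfolding prod_measure_def prod_weight_def ..

lemma prod_weight_Suc_notin:
  assumes "x \<subseteq> {1..n}"
  shows "prod_weight (Suc n) p x = (1 - p (Suc n)) * prod_weight n p x"
proof -
  have "{1..Suc n} - x = insert (Suc n) ({1..n} - x)" using assms by (auto simp: le_Suc_eq)
  then show ?thesis unfolding prod_weight_def by (simp add: mult_ac)
qed

lemma prod_weight_Suc_in:
  assumes "x \<subseteq> {1..Suc n}" "Suc n \<in> x"
  shows "prod_weight (Suc n) p x = p (Suc n) * prod_weight n p (x - {Suc n})"
proof -
  have "finite x" using assms(1) by (rule finite_subset) simp
  then have "(\<Prod>l\<in>x. p l) = p (Suc n) * (\<Prod>l\<in>x - {Suc n}. p l)"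
    using assms(2) by (rule prod.remove)
  moreover have "{1..Suc n} - x = {1..n} - (x - {Suc n})" using assms by (auto simp: le_Suc_eq)
  ultimately show ?thesis unfolding prod_weight_def by (simp add: mult_ac)
qed

lemma deletion_subset_Pow:
  assumes "U \<subseteq> Pow {1..Suc n}"
  shows "deletion (Suc n) U \<subseteq> Pow {1..n}"
  using assms unfolding deletion_def by (auto simp: le_Suc_eq subset_iff)

lemma link_subset_Pow:
  assumes "U \<subseteq> Pow {1..Suc n}"
  shows "link (Suc n) U \<subseteq> Pow {1..n}"
  using assms unfolding link_def by (auto simp: le_Suc_eq subset_iff)

lemma prod_measure_Suc:
  assumes U: "U \<subseteq> Pow {1..Suc n}"
  shows "prod_measure (Suc n) p U = (1 - p (Suc n)) * prod_measure n p (deletion (Suc n) U)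
    + p (Suc n) * prod_measure n p (link (Suc n) U)"
proof -
  define B where "B = {x \<in> U. Suc n \<in> x}"
  have "finite U" using U by (rule finite_subset) simp
  then have "prod_measure (Suc n) p U =
      (\<Sum>x\<in>deletion (Suc n) U. prod_weight (Suc n) p x) + (\<Sum>x\<in>B. prod_weight (Suc n) p x)"
    unfolding prod_measure_eq_sum_prod_weight deletion_def B_def
    by (subst sum.union_disjoint[symmetric]) (auto intro: sum.cong)
  also have "(\<Sum>x\<in>deletion (Suc n) U. prod_weight (Suc n) p x)
      = (1 - p (Suc n)) * prod_measure n p (deletion (Suc n) U)"
    using deletion_subset_Pow[OF U]
    by (auto simp: prod_measure_eq_sum_prod_weight sum_distrib_left prod_weight_Suc_notin
        intro!: sum.cong)
  also have "(\<Sum>x\<in>B. prod_weight (Suc n) p x) = p (Suc n) * (\<Sum>x\<in>B. prod_weight n p (x - {Suc n}))"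
    using U by (auto simp: B_def sum_distrib_left prod_weight_Suc_in intro!: sum.cong)
  also have "(\<Sum>x\<in>B. prod_weight n p (x - {Suc n})) = prod_measure n p (link (Suc n) U)"
  proof -
    have "inj_on (\<lambda>x. x - {Suc n}) B"
      by (rule inj_onI) (auto simp: B_def dest: insert_Diff)
    then show ?thesis
      by (simp add: prod_measure_eq_sum_prod_weight link_def B_def sum.reindex)
  qed
  finally show ?thesis .
qed

lemma prod_measure_0:
  assumes "U \<subseteq> Pow {1..0}"
  shows "prod_measure 0 p U = (if {} \<in> U then 1 else 0)"
proof -
  have "U = {} \<or> U = {{}}" using assms by auto
  then show ?thesis unfolding prod_measure_def by auto
qed

lemma cross_intersecting_commute: "cross_intersecting U V \<longleftrightarrow> cross_intersecting V U"
  unfolding cross_intersecting_def by blast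

lemma cross_intersecting_deletion:
  "cross_intersecting U V \<Longrightarrow> cross_intersecting (deletion m U) (deletion m V)"
  unfolding cross_intersecting_def deletion_def by blast

lemma cross_intersecting_deletion_link:
  "cross_intersecting U V \<Longrightarrow> cross_intersecting (deletion m U) (link m V)"
  unfolding cross_intersecting_def deletion_def link_def by blast

lemma (in bias_pair) feasible_prod_measure:
  assumes "U1 \<subseteq> Pow {1..n}" "U2 \<subseteq> Pow {1..n}" "cross_intersecting U1 U2"
    and "\<forall>l\<in>{1..n}. 0 \<le> p1 l \<and> p1 l \<le> P1" "\<forall>l\<in>{1..n}. 0 \<le> p2 l \<and> p2 l \<le> P2"
  shows "feasible (prod_measure n p1 U1) (prod_measure n p2 U2)"
  using assms
proof (induction n arbitrary: U1 U2)
  case 0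
  then have "\<not> ({} \<in> U1 \<and> {} \<in> U2)" unfolding cross_intersecting_def by auto
  then show ?case
    using feasible_0_0 feasible_0_1 feasible_1_0 prod_measure_0[OF "0.prems"(1)]
      prod_measure_0[OF "0.prems"(2)]
    by auto
next
  case (Suc n)
  let ?m = "Suc n"
  have sub: "deletion ?m U1 \<subseteq> Pow {1..n}" "link ?m U1 \<subseteq> Pow {1..n}"
    "deletion ?m U2 \<subseteq> Pow {1..n}" "link ?m U2 \<subseteq> Pow {1..n}"
    using deletion_subset_Pow[OF Suc.prems(1)] link_subset_Pow[OF Suc.prems(1)]
      deletion_subset_Pow[OF Suc.prems(2)] link_subset_Pow[OF Suc.prems(2)] by simp_all
  have bounds: "\<forall>l\<in>{1..n}. 0 \<le> p1 l \<and> p1 l \<le> P1" "\<forall>l\<in>{1..n}. 0 \<le> p2 l \<and> p2 l \<le> P2"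
    using Suc.prems(4,5) by auto
  note ci = Suc.prems(3)
  have "feasible
      ((1 - p1 ?m) * prod_measure n p1 (deletion ?m U1) + p1 ?m * prod_measure n p1 (link ?m U1))
      ((1 - p2 ?m) * prod_measure n p2 (deletion ?m U2) + p2 ?m * prod_measure n p2 (link ?m U2))"
  proof (rule feasible_combination)
    show "feasible (prod_measure n p1 (deletion ?m U1)) (prod_measure n p2 (deletion ?m U2))"
      using sub bounds cross_intersecting_deletion[OF ci] by (intro Suc.IH) auto
    show "feasible (prod_measure n p1 (deletion ?m U1)) (prod_measure n p2 (link ?m U2))"
      using sub bounds cross_intersecting_deletion_link[OF ci] by (intro Suc.IH) auto
    have "cross_intersecting (deletion ?m U2) (link ?m U1)"
      using ci by (intro cross_intersecting_deletion_link) (simp add: cross_intersecting_commute)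
    then have "cross_intersecting (link ?m U1) (deletion ?m U2)"
      by (simp add: cross_intersecting_commute)
    then show "feasible (prod_measure n p1 (link ?m U1)) (prod_measure n p2 (deletion ?m U2))"
      using sub bounds by (intro Suc.IH) auto
  qed (use Suc.prems(4,5) in auto)
  then show ?case using Suc.prems(1,2) by (simp add: prod_measure_Suc)
qed

theorem lemma1:
  fixes n :: nat and p1 p2 :: "nat \<Rightarrow> real" and U1 U2 :: "nat set set"
  assumes "n \<ge> 1"
    and "\<forall>l\<in>{1..n}. 0 < p1 l \<and> p1 l < 1"
    and "\<forall>l\<in>{1..n}. 0 < p2 l \<and> p2 l < 1"
    and "p1 1 = Max (p1 ` {1..n})"
    and "p2 1 = Max (p2 ` {1..n})"
    and "p1 1 \<ge> p2 1"
    and "p1 1 \<le> 1/2"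
    and "U1 \<subseteq> Pow {1..n}" and "U2 \<subseteq> Pow {1..n}"
    and "cross_intersecting U1 U2"
  shows "prod_measure n p1 U1 * prod_measure n p2 U2 \<le> p1 1 * p2 1"
proof -
  have "1 \<in> {1..n}" using assms(1) by simp
  then interpret bias_pair "p1 1" "p2 1"
    using assms(3,6,7) by unfold_locales auto
  have "\<forall>l\<in>{1..n}. 0 \<le> p1 l \<and> p1 l \<le> p1 1" "\<forall>l\<in>{1..n}. 0 \<le> p2 l \<and> p2 l \<le> p2 1"
    using assms(2-5) by (auto simp: less_imp_le)
  then have "feasible (prod_measure n p1 U1) (prod_measure n p2 U2)"
    using assms(8-10) by (intro feasible_prod_measure)
  then show ?thesis by (rule feasible_prod_le)
qed

end
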